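(* Let $N\ge1$, let $J(x)$ be an $N\times N$ matrix whose entries are linear forms in $x\in\mathbb R^N$, let $H(x)=\tfrac12x^T\mathcal Hx$ be a quadratic form with constant symmetric $\mathcal H$, and let $f(x)=J(x)\nabla H(x)$. Let $\tilde x=\Phi_f(x,\varepsilon)$ be the Kahan map of $f$, and suppose $I-\varepsilon f'(x)$ and $I-\varepsilon J(x)\mathcal H$ are invertible. Then $$\tilde x-x=2\varepsilon\big(I-\varepsilon J(x)\mathcal H\big)^{-1}J\Big(\tfrac{x+\tilde x}{2}\Big)\nabla H(x),$$ and equivalently $$\tilde x=\big(I-\varepsilon J(x)\mathcal H\big)^{-1}\big(I+\varepsilon J(\tilde x)\mathcal H\big)x.$$
   Context: Kahan map: for a vector field $f$ on $\mathbb R^N$ whose components are homogeneous quadratic polynomials and a parameter $\varepsilon$, the Kahan map is $\Phi_f(x,\varepsilon)=\tilde x=x+2\varepsilon(I-\varepsilon f'(x))^{-1}f(x)=(I-\varepsilon f'(x))^{-1}x$, where $f'(x)$ is the Jacobi matrix of $f$ (defined wherever $I-\varepsilon f'(x)$ is invertible); it is the solution $\tilde x$ of $\frac{\tilde x-x}{2\varepsilon}=2f(\frac{x+\tilde x}{2})-\frac12f(x)-\frac12 f(\tilde x)$. *)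

theory Defs
  imports "HOL-Analysis.Analysis"
begin

text \<open>Meaningful where I - eps f'(x) is invertible.\<close>
definition kahan_map :: "(real^'n \<Rightarrow> real^'n) \<Rightarrow> real^'n \<Rightarrow> real \<Rightarrow> real^'n" where
  "kahan_map f x \<epsilon> = matrix_inv (mat 1 - \<epsilon> *\<^sub>R jacobian f (at x)) *v x"

end

theory Submission
  imports Defs
begin

text \<open>For \<open>f(y) = J(y) H y\<close> with \<open>J\<close> linear, the Jacobian acts as
  \<open>f'(x) v = J(x) H v + J(v) H x\<close>, so the Kahan equation \<open>(I - \<epsilon> f'(x)) x' = x\<close> reads
  \<open>x' - \<epsilon> J(x) H x' - \<epsilon> J(x') H x = x\<close>. This is \<open>(I - \<epsilon> J(x) H) x' = (I + \<epsilon> J(x') H) x\<close>;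
  subtracting \<open>(I - \<epsilon> J(x) H) x\<close> and using linearity of \<open>J\<close> gives
  \<open>(I - \<epsilon> J(x) H)(x' - x) = 2\<epsilon> J((x + x')/2) H x\<close>.\<close>

lemma matrix_inv_right_left:
  fixes A :: "'a::semiring_1^'n^'m"
  assumes "invertible A"
  shows "A ** matrix_inv A = mat 1 \<and> matrix_inv A ** A = mat 1"
  using assms unfolding invertible_def matrix_inv_def by (rule someI_ex)

lemma matrix_inv_solve:
  fixes A :: "'a::comm_semiring_1^'n^'m"
  assumes "invertible A" "A *v y = z"
  shows "y = matrix_inv A *v z"
  using matrix_inv_right_left[OF assms(1)] assms(2)
  by (metis matrix_vector_mul_assoc matrix_vector_mul_lid)

lemma matrix_vector_mult_matrix_inv:
  fixes A :: "'a::comm_semiring_1^'n^'m"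
  assumes "invertible A"
  shows "A *v (matrix_inv A *v v) = v"
  using matrix_inv_right_left[OF assms] by (simp add: matrix_vector_mul_assoc)

lemma bounded_bilinear_matrix_vector_mult:
  "bounded_bilinear (\<lambda>(A::real^'n^'m) (v::real^'n). A *v v)"
proof -
  have "bilinear (\<lambda>(A::real^'n^'m) (v::real^'n). A *v v)"
    unfolding bilinear_def
  proof (intro conjI allI)
    fix v :: "real^'n"
    show "linear (\<lambda>A::real^'n^'m. A *v v)"
      by (rule linearI) (simp_all add: matrix_vector_mult_add_rdistrib scaleR_matrix_vector_assoc)
  next
    fix A :: "real^'n^'m"
    show "linear (\<lambda>v. A *v v)" by (rule matrix_vector_mul_linear)
  qed
  then show ?thesis by (simp add: bilinear_conv_bounded_bilinear)
qed

lemma has_derivative_linear_matrix_field: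
  fixes J :: "real^'n \<Rightarrow> real^'k^'m" and H :: "real^'n^'k"
  assumes "linear J"
  shows "((\<lambda>y. J y *v (H *v y)) has_derivative (\<lambda>v. J x *v (H *v v) + J v *v (H *v x))) (at x)"
proof -
  have "(J has_derivative J) (at x)"
    using assms by (rule linear_imp_has_derivative)
  moreover have "((\<lambda>y. H *v y) has_derivative (\<lambda>y. H *v y)) (at x)"
    by (simp add: linear_imp_has_derivative matrix_vector_mul_linear)
  ultimately show ?thesis
    by (rule bounded_bilinear.FDERIV[OF bounded_bilinear_matrix_vector_mult])
qed

lemma jacobian_linear_matrix_field:
  fixes J :: "real^'n \<Rightarrow> real^'k^'m" and H :: "real^'n^'k"
  assumes "linear J"
  shows "jacobian (\<lambda>y. J y *v (H *v y)) (at x) *v v = J x *v (H *v v) + J v *v (H *v x)"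
proof -
  let ?D = "\<lambda>v. J x *v (H *v v) + J v *v (H *v x)"
  have "linear ?D"
    by (rule linearI) (simp_all add: linear_add[OF assms] linear_scale[OF assms]
        matrix_vector_right_distrib matrix_vector_mult_add_rdistrib
        matrix_vector_mult_scaleR scaleR_matrix_vector_assoc[symmetric] algebra_simps)
  moreover have "frechet_derivative (\<lambda>y. J y *v (H *v y)) (at x) = ?D"
    using has_derivative_linear_matrix_field[OF assms] by (rule frechet_derivative_at[symmetric])
  ultimately show ?thesis
    unfolding jacobian_def by (simp add: matrix_works)
qed

lemma kahan_map_linear_matrix_field_eq:
  fixes J :: "real^'n \<Rightarrow> real^'n^'n" and H :: "real^'n^'n"
  assumes "linear J"
    and "invertible (mat 1 - \<epsilon> *\<^sub>R jacobian (\<lambda>y. J y *v (H *v y)) (at x))"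
  defines "xt \<equiv> kahan_map (\<lambda>y. J y *v (H *v y)) x \<epsilon>"
  shows "xt - \<epsilon> *\<^sub>R (J x *v (H *v xt) + J xt *v (H *v x)) = x"
proof -
  let ?A = "mat 1 - \<epsilon> *\<^sub>R jacobian (\<lambda>y. J y *v (H *v y)) (at x)"
  have "?A *v (matrix_inv ?A *v x) = x"
    by (rule matrix_vector_mult_matrix_inv[OF assms(2)])
  then have "?A *v xt = x"
    unfolding xt_def kahan_map_def .
  then show ?thesis
    by (simp add: matrix_vector_mult_diff_rdistrib scaleR_matrix_vector_assoc[symmetric]
        jacobian_linear_matrix_field[OF assms(1)])
qed

lemma matrix_vector_mult_mat_1_pm_scaleR:
  fixes A B :: "real^'n^'n"
  shows "(mat 1 - k *\<^sub>R (A ** B)) *v v = v - k *\<^sub>R (A *v (B *v v))"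
    and "(mat 1 + k *\<^sub>R (A ** B)) *v v = v + k *\<^sub>R (A *v (B *v v))"
  by (simp_all add: matrix_vector_mult_diff_rdistrib matrix_vector_mult_add_rdistrib
      scaleR_matrix_vector_assoc[symmetric] matrix_vector_mul_assoc[symmetric])

theorem mainTheorem8:
  fixes J :: "real^'n \<Rightarrow> real^'n^'n" and HH :: "real^'n^'n"
    and f :: "real^'n \<Rightarrow> real^'n" and x xt :: "real^'n" and \<epsilon> :: real
  assumes J_lin: "linear J"
    and H_sym: "transpose HH = HH"
    and f_def: "\<And>y. f y = J y *v (HH *v y)"
    and inv1: "invertible (mat 1 - \<epsilon> *\<^sub>R jacobian f (at x))"
    and inv2: "invertible (mat 1 - \<epsilon> *\<^sub>R (J x ** HH))"
    and xt_def: "xt = kahan_map f x \<epsilon>"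
  shows "xt - x = (2 * \<epsilon>) *\<^sub>R (matrix_inv (mat 1 - \<epsilon> *\<^sub>R (J x ** HH))
                    *v (J ((1/2) *\<^sub>R (x + xt)) *v (HH *v x)))
       \<and> xt = matrix_inv (mat 1 - \<epsilon> *\<^sub>R (J x ** HH)) *v ((mat 1 + \<epsilon> *\<^sub>R (J xt ** HH)) *v x)"
proof -
  let ?M = "mat 1 - \<epsilon> *\<^sub>R (J x ** HH)"
  have f_eq: "f = (\<lambda>y. J y *v (HH *v y))" using f_def by auto
  have kahan: "xt - \<epsilon> *\<^sub>R (J x *v (HH *v xt) + J xt *v (HH *v x)) = x"
    using kahan_map_linear_matrix_field_eq[OF J_lin] inv1 xt_def unfolding f_eq by blast
  have midpoint: "J ((1/2) *\<^sub>R (x + xt)) = (1/2) *\<^sub>R (J x + J xt)"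
    using J_lin by (simp add: linear_add linear_scale)
  have rearranged: "?M *v xt = (mat 1 + \<epsilon> *\<^sub>R (J xt ** HH)) *v x"
    using kahan unfolding matrix_vector_mult_mat_1_pm_scaleR by (simp add: algebra_simps)
  have increment: "?M *v (xt - x) = (2 * \<epsilon>) *\<^sub>R (J ((1/2) *\<^sub>R (x + xt)) *v (HH *v x))"
    using kahan unfolding matrix_vector_mult_mat_1_pm_scaleR midpoint
    by (simp add: matrix_vector_right_distrib matrix_vector_mult_diff_distrib
        matrix_vector_mult_add_rdistrib scaleR_matrix_vector_assoc[symmetric] algebra_simps)
  show ?thesis
    using matrix_inv_solve[OF inv2 increment] matrix_inv_solve[OF inv2 rearranged]
    by (simp add: matrix_vector_mult_scaleR)
qed

end
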